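(* Let $k$ be a positive integer, $a=6k+5$, $b=a+\frac{a-3}{2}$, $c=b+1$, $S=\{a,b,c\}$, $G=\langle S\rangle$. For $i\in[0,k]$ let $A_{i,k}=([a,a+3i]\cup[b,b+1+3i]\cup[2a,2a+3i])+\{2ib\}$, $B_{i,k}=([a,a+1+3i]\cup[b,b+3+3i]\cup[2a,2a+1+3i])+\{(2i+1)b\}$, $I_{i,k}=A_{i,k}\cup B_{i,k}$; let $C=[2a+2kb,\infty[$ and $H_{13,k}=\{0\}\cup\bigcup_{i=0}^{k}I_{i,k}\cup C$. Then: (1) $H_{13,k}$ is a co-finite submonoid of $G$ containing $S$; (2) $H_{13,k}$ is a $3$-permutation numerical semigroup.
   Context: $\mathbb{N}=\{0,1,2,\dots\}$. A numerical semigroup is a submonoid $G$ of $(\mathbb{N},+,0)$ with $\mathbb{N}\setminus G$ finite; $\langle S\rangle$ is the submonoid generated by $S$. Writing the elements of a numerical semigroup as $0=g_0<g_1<g_2<\cdots$, it is an $n$-permutation numerical semigroup if it is generated by $\{g_1,\dots,g_n\}$ and for every $k\in\mathbb{N}$ the tuple $(g_{kn+1}\bmod n,\dots,g_{kn+n}\bmod n)$ contains exactly one representative of each residue class mod $n$. Notation: $[u,v]=\{x\in\mathbb{N}:u\le x\le v\}$, $[u,\infty[=\{x\in\mathbb{N}:x\ge u\}$; $X+Y=\{x+y:x\in X,y\in Y\}$. *)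

theory Defs
  imports Main "HOL-Library.Infinite_Set"
begin

definition submonoid :: "nat set \<Rightarrow> bool" where
  "submonoid M \<longleftrightarrow> 0 \<in> M \<and> (\<forall>x\<in>M. \<forall>y\<in>M. x + y \<in> M)"

definition gen :: "nat set \<Rightarrow> nat set" where
  "gen S = \<Inter>{M. submonoid M \<and> S \<subseteq> M}"

definition numerical_semigroup :: "nat set \<Rightarrow> bool" where
  "numerical_semigroup G \<longleftrightarrow> submonoid G \<and> finite (UNIV - G)"

definition setplus :: "nat set \<Rightarrow> nat set \<Rightarrow> nat set" (infixl "\<oplus>" 65) where
  "X \<oplus> Y = {x + y | x y. x \<in> X \<and> y \<in> Y}"

text \<open>Elements of G listed increasingly: g_j = enumerate G j (g_0 = 0).\<close>
definition perm_num_semigroup :: "nat \<Rightarrow> nat set \<Rightarrow> bool" where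
  "perm_num_semigroup n G \<longleftrightarrow> numerical_semigroup G
     \<and> G = gen {enumerate G j | j. 1 \<le> j \<and> j \<le> n}
     \<and> (\<forall>k. bij_betw (\<lambda>j. enumerate G (k * n + j) mod n) {1..n} {0..<n})"

definition aa :: "nat \<Rightarrow> nat" where "aa k = 6 * k + 5"
definition bb :: "nat \<Rightarrow> nat" where "bb k = aa k + (aa k - 3) div 2"
definition cc :: "nat \<Rightarrow> nat" where "cc k = bb k + 1"

definition A_set :: "nat \<Rightarrow> nat \<Rightarrow> nat set" where
  "A_set i k = ({aa k .. aa k + 3*i} \<union> {bb k .. bb k + 1 + 3*i} \<union> {2 * aa k .. 2 * aa k + 3*i})
      \<oplus> {2 * i * bb k}"

definition B_set :: "nat \<Rightarrow> nat \<Rightarrow> nat set" where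
  "B_set i k = ({aa k .. aa k + 1 + 3*i} \<union> {bb k .. bb k + 3 + 3*i} \<union> {2 * aa k .. 2 * aa k + 1 + 3*i})
      \<oplus> {(2 * i + 1) * bb k}"

definition I_set :: "nat \<Rightarrow> nat \<Rightarrow> nat set" where
  "I_set i k = A_set i k \<union> B_set i k"

definition H13 :: "nat \<Rightarrow> nat set" where
  "H13 k = {0} \<union> (\<Union>i\<in>{0..k}. I_set i k) \<union> {2 * aa k + 2 * k * bb k ..}"

end

theory Submission
  imports Defs
begin

text \<open>
  Write x = q * b + r with b = 9k + 6 and r < b. Each piece of A_{i,k} and B_{i,k} is a run of
  remainders r in one of the blocks q = 2i, 2i + 1, 2i + 2, and collecting them shows that
  x \<in> H13 k exactly when r lies in one of three runs: r \<le> 3q/2, or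
  3k + 4 \<le> r \<le> 3k + 4 + 3(q - 1)/2, or 6k + 5 \<le> r \<le> 6k + 5 + 3q/2 (rounding down).
  Since c = b + 1, 3a = 2b + 3 and 2a = b + 3k + 4, every element of a run is a sum of
  generators, and adding a generator to an element of a run lands in a run again; hence
  H13 k is the submonoid generated by a, b, c.

  As 3 divides b, x and r agree modulo 3. Between consecutive elements of H13 k the residue
  modulo 3 goes up by one, except across some gaps between runs. An explicit phase function of
  (q, r) equals the index of x in the increasing enumeration modulo 3, and below every
  irregular gap the phase is 0. So the residues of g_{3m+1}, g_{3m+2}, g_{3m+3} are
  \<rho>, \<rho> + 1, \<rho> + 2 modulo 3.
\<close>

lemma mult_add_less_mult_add:
  fixes b :: nat
  assumes "r < b" "q < q'"
  shows "q*b + r < q'*b + r'"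
proof -
  have "q*b + r < (q+1)*b" using assms(1) by simp
  also have "\<dots> \<le> q'*b" using assms(2) by (intro mult_le_mono1) simp
  finally show ?thesis by simp
qed

lemma mult_add_le_mult_add_iff:
  fixes b :: nat
  assumes "r1 < b" "r2 < b"
  shows "q1*b + r1 \<le> q2*b + r2 \<longleftrightarrow> q1 < q2 \<or> (q1 = q2 \<and> r1 \<le> r2)"
proof (cases q1 q2 rule: linorder_cases)
  case less
  then show ?thesis using mult_add_less_mult_add[OF assms(1) less, of r2] by simp
next
  case greater
  then show ?thesis using mult_add_less_mult_add[OF assms(2) greater, of r1] by simp
qed simp

lemma bij_betw_consecutive_mod_3:
  fixes f :: "nat \<Rightarrow> nat"
  assumes "f 2 mod 3 = Suc (f 1) mod 3" "f 3 mod 3 = Suc (f 2) mod 3"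
  shows "bij_betw (\<lambda>j. f j mod 3) {1..3} {0..<3}"
proof -
  have dom: "{1..3::nat} = {1, 2, 3}" and codom: "{0..<3::nat} = {0, 1, 2}" by auto
  define \<rho> where "\<rho> = f 1 mod 3"
  have f2: "f 2 mod 3 = Suc \<rho> mod 3" using assms(1) by (simp add: \<rho>_def mod_Suc_eq)
  have f3: "f 3 mod 3 = Suc (Suc \<rho>) mod 3" using assms(2) f2 by (metis mod_Suc_eq)
  have "\<rho> < 3" by (simp add: \<rho>_def)
  then consider "\<rho> = 0" | "\<rho> = 1" | "\<rho> = 2" by linarith
  then show ?thesis
    unfolding dom codom bij_betw_def inj_on_def using f2 f3 \<rho>_def by cases auto
qed

lemma submonoid_gen: "submonoid (gen S)"
  unfolding submonoid_def gen_def by auto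

lemma subset_gen: "S \<subseteq> gen S"
  unfolding gen_def by auto

lemma gen_least: "submonoid M \<Longrightarrow> S \<subseteq> M \<Longrightarrow> gen S \<subseteq> M"
  unfolding gen_def by auto

lemma add_mem_gen: "x \<in> gen S \<Longrightarrow> y \<in> gen S \<Longrightarrow> x + y \<in> gen S"
  using submonoid_gen unfolding submonoid_def by blast

lemma mult_mem_gen: "x \<in> gen S \<Longrightarrow> n * x \<in> gen S"
  using submonoid_gen unfolding submonoid_def by (induction n) auto

lemma lin_comb_mem_gen:
  assumes "x \<in> S" "y \<in> S" "z \<in> S"
  shows "l * x + m * y + n * z \<in> gen S"
  using assms subset_gen by (intro add_mem_gen mult_mem_gen) auto

lemma mem_setplus_singleton_iff: "x \<in> X \<oplus> {t} \<longleftrightarrow> t \<le> x \<and> x - t \<in> X"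
  unfolding setplus_def by force

section \<open>Block structure of H13\<close>

lemma aa_eq: "aa k = 6*k+5" and bb_eq: "bb k = 9*k+6" and cc_eq: "cc k = 9*k+7"
  unfolding aa_def bb_def cc_def by simp_all

lemma A_set_eq:
  "A_set i k = {2*i*bb k + r | r. aa k \<le> r \<and> r \<le> aa k + 3*i}
             \<union> {(2*i+1)*bb k + r | r. r \<le> 3*i+1 \<or> (3*k+4 \<le> r \<and> r \<le> 3*k+4+3*i)}"
  (is "_ = ?L \<union> ?R")
proof (intro set_eqI iffI)
  fix x assume x: "x \<in> A_set i k"
  define u where "u = x - 2*i*bb k"
  have xu: "x = 2*i*bb k + u" and
    u: "aa k \<le> u \<and> u \<le> aa k + 3*i \<or> bb k \<le> u \<and> u \<le> bb k + 1 + 3*i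
      \<or> 2 * aa k \<le> u \<and> u \<le> 2 * aa k + 3*i"
    using x unfolding A_set_def mem_setplus_singleton_iff u_def by auto
  show "x \<in> ?L \<union> ?R"
  proof (cases "bb k \<le> u")
    case True
    then have "x = (2*i+1)*bb k + (u - bb k)" using xu by simp
    moreover have "u - bb k \<le> 3*i+1 \<or> (3*k+4 \<le> u - bb k \<and> u - bb k \<le> 3*k+4+3*i)"
      using u True by (auto simp: aa_eq bb_eq)
    ultimately show ?thesis by blast
  next
    case False
    then show ?thesis using u xu by (auto simp: aa_eq bb_eq)
  qed
next
  fix x assume "x \<in> ?L \<union> ?R"
  then show "x \<in> A_set i k"
    unfolding A_set_def mem_setplus_singleton_iff aa_eq bb_eq by auto
qed

lemma B_set_eq:
  "B_set i k = {(2*i+1)*bb k + r | r. aa k \<le> r \<and> r \<le> aa k + 3*i + 1}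
             \<union> {(2*i+2)*bb k + r | r. r \<le> 3*i+3 \<or> (3*k+4 \<le> r \<and> r \<le> 3*k+5+3*i)}"
  (is "_ = ?L \<union> ?R")
proof (intro set_eqI iffI)
  fix x assume x: "x \<in> B_set i k"
  define u where "u = x - (2*i+1)*bb k"
  have xu: "x = (2*i+1)*bb k + u" and
    u: "aa k \<le> u \<and> u \<le> aa k + 1 + 3*i \<or> bb k \<le> u \<and> u \<le> bb k + 3 + 3*i
      \<or> 2 * aa k \<le> u \<and> u \<le> 2 * aa k + 1 + 3*i"
    using x unfolding B_set_def mem_setplus_singleton_iff u_def by auto
  show "x \<in> ?L \<union> ?R"
  proof (cases "bb k \<le> u \<and> \<not> u \<le> aa k + 3*i + 1")
    case True
    then have "x = (2*i+2)*bb k + (u - bb k)" using xu by simp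
    moreover have "u - bb k \<le> 3*i+3 \<or> (3*k+4 \<le> u - bb k \<and> u - bb k \<le> 3*k+5+3*i)"
      using u True by (auto simp: aa_eq bb_eq)
    ultimately show ?thesis by blast
  next
    case False
    then show ?thesis using u xu by (auto simp: aa_eq bb_eq)
  qed
next
  fix x assume "x \<in> ?L \<union> ?R"
  then show "x \<in> B_set i k"
    unfolding B_set_def mem_setplus_singleton_iff aa_eq bb_eq by auto
qed

lemma mem_A_set_even: "aa k \<le> r \<Longrightarrow> r \<le> aa k + 3*i \<Longrightarrow> (2*i) * bb k + r \<in> A_set i k"
  unfolding A_set_eq by blast

lemma mem_A_set_odd:
  "r \<le> 3*i+1 \<or> (3*k+4 \<le> r \<and> r \<le> 3*k+4+3*i) \<Longrightarrow> (2*i+1) * bb k + r \<in> A_set i k"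
  unfolding A_set_eq by blast

lemma mem_B_set_odd: "aa k \<le> r \<Longrightarrow> r \<le> aa k + 3*i + 1 \<Longrightarrow> (2*i+1) * bb k + r \<in> B_set i k"
  unfolding B_set_eq by blast

lemma mem_B_set_even:
  "r \<le> 3*i+3 \<or> (3*k+4 \<le> r \<and> r \<le> 3*k+5+3*i) \<Longrightarrow> (2*i+2) * bb k + r \<in> B_set i k"
  unfolding B_set_eq by blast

definition H13_digits :: "nat \<Rightarrow> nat \<Rightarrow> nat \<Rightarrow> bool" where
  "H13_digits k q r \<longleftrightarrow> 2*r \<le> 3*q \<or> (3*k+4 \<le> r \<and> 2*r \<le> 6*k+5 + 3*q)
    \<or> (6*k+5 \<le> r \<and> 2*r \<le> 12*k+10 + 3*q)"

lemma H13_tail_iff: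
  assumes "r < bb k"
  shows "2 * aa k + 2 * k * bb k \<le> q * bb k + r \<longleftrightarrow> 2*k+1 < q \<or> (q = 2*k+1 \<and> 3*k+4 \<le> r)"
proof -
  have tail: "2 * aa k + 2 * k * bb k = (2*k+1) * bb k + (3*k+4)"
    by (simp add: aa_eq bb_eq algebra_simps)
  have "3*k+4 < bb k" by (simp add: bb_eq)
  then show ?thesis unfolding tail using mult_add_le_mult_add_iff[OF _ assms] by blast
qed

lemma H13_digits_tail:
  assumes "r < bb k" "2*k+1 < q \<or> (q = 2*k+1 \<and> 3*k+4 \<le> r)"
  shows "H13_digits k q r"
  using assms unfolding H13_digits_def bb_eq by auto

lemma H13_digits_mult_add:
  assumes "H13_digits k q r" "r \<le> bb k"
  shows "H13_digits k ((q * bb k + r) div bb k) ((q * bb k + r) mod bb k)"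
proof (cases "r = bb k")
  \<comment> \<open>r = bb k occurs in the first piece of B_set k k.\<close>
  case True
  then have "q * bb k + r = (q+1) * bb k + 0" by simp
  then show ?thesis unfolding H13_digits_def by (simp add: bb_eq)
next
  case False
  then show ?thesis using assms by (simp add: bb_eq)
qed

lemma H13_digits_if_mem:
  assumes "x \<in> H13 k"
  shows "H13_digits k (x div bb k) (x mod bb k)"
proof -
  have to_digits: "H13_digits k (x div bb k) (x mod bb k)"
    if "x = q * bb k + r" "r \<le> bb k" "H13_digits k q r" for q r
    using H13_digits_mult_add[OF that(3,2)] that(1) by simp
  consider "x = 0" | i where "i \<le> k" "x \<in> A_set i k \<union> B_set i k"
    | "2 * aa k + 2 * k * bb k \<le> x"
    using assms unfolding H13_def I_set_def by auto
  then show ?thesis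
  proof cases
    case 1
    then show ?thesis by (simp add: H13_digits_def)
  next
    case (2 i)
    then consider (A1) r where "x = (2*i) * bb k + r" "aa k \<le> r" "r \<le> aa k + 3*i"
      | (A2) r where "x = (2*i+1) * bb k + r" "r \<le> 3*i+1 \<or> (3*k+4 \<le> r \<and> r \<le> 3*k+4+3*i)"
      | (B1) r where "x = (2*i+1) * bb k + r" "aa k \<le> r" "r \<le> aa k + 3*i + 1"
      | (B2) r where "x = (2*i+2) * bb k + r" "r \<le> 3*i+3 \<or> (3*k+4 \<le> r \<and> r \<le> 3*k+5+3*i)"
      unfolding A_set_eq B_set_eq by blast
    then show ?thesis
    proof cases
      case (A1 r)
      show ?thesis
        by (rule to_digits[OF A1(1)]) (use A1 2(1) in \<open>auto simp: H13_digits_def aa_eq bb_eq\<close>)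
    next
      case (A2 r)
      show ?thesis
        by (rule to_digits[OF A2(1)]) (use A2 2(1) in \<open>auto simp: H13_digits_def aa_eq bb_eq\<close>)
    next
      case (B1 r)
      show ?thesis
        by (rule to_digits[OF B1(1)]) (use B1 2(1) in \<open>auto simp: H13_digits_def aa_eq bb_eq\<close>)
    next
      case (B2 r)
      show ?thesis
        by (rule to_digits[OF B2(1)]) (use B2 2(1) in \<open>auto simp: H13_digits_def aa_eq bb_eq\<close>)
    qed
  next
    case 3
    then have "2 * aa k + 2 * k * bb k \<le> x div bb k * bb k + x mod bb k" by simp
    moreover have "x mod bb k < bb k" by (simp add: bb_eq)
    ultimately show ?thesis using H13_tail_iff H13_digits_tail by blast
  qed
qed

lemma mem_H13I:
  assumes "i \<le> k" "x \<in> A_set i k \<or> x \<in> B_set i k"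
  shows "x \<in> H13 k"
  using assms unfolding H13_def I_set_def by auto

lemma odd_block_mem_H13:
  assumes "H13_digits k (2*i+1) r" "i \<le> k"
  shows "(2*i+1) * bb k + r \<in> H13 k"
proof -
  have "aa k \<le> r \<and> r \<le> aa k + 3*i + 1 \<or> r \<le> 3*i+1 \<or> (3*k+4 \<le> r \<and> r \<le> 3*k+4+3*i)"
    using assms(1) by (auto simp: H13_digits_def aa_eq)
  then have "(2*i+1) * bb k + r \<in> B_set i k \<or> (2*i+1) * bb k + r \<in> A_set i k"
    using mem_B_set_odd mem_A_set_odd by blast
  then show ?thesis using mem_H13I[OF assms(2)] by blast
qed

lemma even_block_mem_H13:
  assumes "H13_digits k (2*(j+1)) r" "j < k"
  shows "(2*(j+1)) * bb k + r \<in> H13 k"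
proof -
  have "aa k \<le> r \<and> r \<le> aa k + 3*(j+1) \<or> r \<le> 3*j+3 \<or> (3*k+4 \<le> r \<and> r \<le> 3*k+5+3*j)"
    using assms(1) by (auto simp: H13_digits_def aa_eq)
  moreover have "(2*(j+1)) * bb k + r \<in> B_set j k"
    if "r \<le> 3*j+3 \<or> (3*k+4 \<le> r \<and> r \<le> 3*k+5+3*j)"
    using mem_B_set_even[OF that] by (simp add: algebra_simps)
  ultimately show ?thesis
    using mem_A_set_even[of k r "j+1"] mem_H13I[of "j+1" k] mem_H13I[of j k] assms(2) by auto
qed

lemma mult_add_mem_H13:
  assumes "H13_digits k q r" "r < bb k"
  shows "q * bb k + r \<in> H13 k"
proof (cases "2*k+1 < q \<or> (q = 2*k+1 \<and> 3*k+4 \<le> r)")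
  case True
  then show ?thesis unfolding H13_def H13_tail_iff[OF assms(2), symmetric] by simp
next
  case False
  have "q = 0 \<or> (\<exists>j. q = 2*(j+1)) \<or> (\<exists>i. q = 2*i+1)" by presburger
  then consider "q = 0" | j where "q = 2*(j+1)" | i where "q = 2*i+1" by blast
  then show ?thesis
  proof cases
    case 1
    then have "r = 0 \<or> r = aa k" using assms(1) by (auto simp: H13_digits_def aa_eq)
    moreover have "aa k \<in> H13 k" using mem_H13I[of 0 k] mem_A_set_even[of k "aa k" 0] by simp
    ultimately show ?thesis using 1 by (auto simp: H13_def)
  next
    case (2 j)
    then show ?thesis using even_block_mem_H13 assms(1) False by simp
  next
    case (3 i)
    then show ?thesis using odd_block_mem_H13 assms(1) False by simp
  qed
qed

lemma mem_H13_iff_digits: "x \<in> H13 k \<longleftrightarrow> H13_digits k (x div bb k) (x mod bb k)"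
proof
  assume "H13_digits k (x div bb k) (x mod bb k)"
  then have "x div bb k * bb k + x mod bb k \<in> H13 k"
    by (rule mult_add_mem_H13) (simp add: bb_eq)
  then show "x \<in> H13 k" by simp
qed (rule H13_digits_if_mem)

lemma mem_H13_cases:
  assumes "x \<in> H13 k"
  obtains q r where "x = q * bb k + r" "r < bb k" "H13_digits k q r"
proof -
  have "x = x div bb k * bb k + x mod bb k" by simp
  moreover have "x mod bb k < bb k" by (simp add: bb_eq)
  ultimately show thesis using that assms mem_H13_iff_digits by blast
qed

section \<open>Closure and generators\<close>

lemma H13_add_bb:
  assumes "x \<in> H13 k"
  shows "x + bb k \<in> H13 k"
proof -
  obtain q r where x: "x = q * bb k + r" "r < bb k" "H13_digits k q r"
    using assms by (rule mem_H13_cases)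
  then have "H13_digits k (q+1) r" unfolding H13_digits_def by auto
  then have "(q+1) * bb k + r \<in> H13 k" using x(2) by (rule mult_add_mem_H13)
  then show ?thesis by (simp add: x(1) algebra_simps)
qed

lemma H13_add_cc:
  assumes "x \<in> H13 k"
  shows "x + cc k \<in> H13 k"
proof -
  obtain q r where x: "x = q * bb k + r" "r < bb k" "H13_digits k q r"
    using assms by (rule mem_H13_cases)
  show ?thesis
  proof (cases "r + 1 < bb k")
    case True
    then have "H13_digits k (q+1) (r+1)" using x(3) unfolding H13_digits_def by auto
    then have "(q+1) * bb k + (r+1) \<in> H13 k" using True by (rule mult_add_mem_H13)
    then show ?thesis by (simp add: x(1) cc_def algebra_simps)
  next
    case False
    then have "x + cc k = (q+2) * bb k + 0" using x(1,2) by (simp add: cc_def)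
    moreover have "(q+2) * bb k + 0 \<in> H13 k"
      by (rule mult_add_mem_H13) (simp_all add: H13_digits_def bb_eq)
    ultimately show ?thesis by simp
  qed
qed

lemma H13_add_aa:
  assumes "x \<in> H13 k"
  shows "x + aa k \<in> H13 k"
proof -
  obtain q r where x: "x = q * bb k + r" "r < bb k" "H13_digits k q r"
    using assms by (rule mem_H13_cases)
  show ?thesis
  proof (cases "r + aa k < bb k")
    case True
    then have "H13_digits k q (r + aa k)" using x(3) unfolding H13_digits_def aa_eq bb_eq by auto
    then have "q * bb k + (r + aa k) \<in> H13 k" using True by (rule mult_add_mem_H13)
    then show ?thesis by (simp add: x(1) algebra_simps)
  next
    case False
    define s where "s = r - (3*k+1)"
    have r: "r = s + (3*k+1)" using False by (simp add: s_def aa_eq bb_eq)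
    have "H13_digits k (q+1) s" using x(2,3) unfolding r H13_digits_def bb_eq by auto
    then have "(q+1) * bb k + s \<in> H13 k" using x(2) r by (intro mult_add_mem_H13) auto
    then show ?thesis by (simp add: x(1) r aa_eq bb_eq algebra_simps)
  qed
qed

lemma mult_add_mem_gen_first_run:
  assumes "2*r \<le> 3*q"
  shows "q * bb k + r \<in> gen {aa k, bb k, cc k}"
proof (cases "r \<le> q")
  case True
  define s where "s = q - r"
  have q: "q = s + r" using True by (simp add: s_def)
  have "q * bb k + r = 0 * aa k + s * bb k + r * cc k"
    unfolding q by (simp add: bb_eq cc_eq algebra_simps)
  then show ?thesis by (simp only:) (rule lin_comb_mem_gen; simp)
next
  case False
  define t g where "t = r - q" and "g = q - 2*t"
  have q: "q = 2*t + g" and r: "r = 3*t + g" using False assms by (simp_all add: t_def g_def)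
  \<comment> \<open>3a = 2b + 3 and c = b + 1\<close>
  have "q * bb k + r = (3*t) * aa k + 0 * bb k + g * cc k"
    unfolding q r by (simp add: aa_eq bb_eq cc_eq algebra_simps)
  then show ?thesis by (simp only:) (rule lin_comb_mem_gen; simp)
qed

lemma mult_add_mem_gen:
  assumes "H13_digits k q r"
  shows "q * bb k + r \<in> gen {aa k, bb k, cc k}"
proof -
  have a: "aa k \<in> gen {aa k, bb k, cc k}" using subset_gen by blast
  consider "2*r \<le> 3*q" | "3*k+4 \<le> r" "2*r \<le> 6*k+5 + 3*q" | "6*k+5 \<le> r" "2*r \<le> 12*k+10 + 3*q"
    using assms unfolding H13_digits_def by blast
  then show ?thesis
  proof cases
    case 1
    then show ?thesis by (rule mult_add_mem_gen_first_run)
  next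
    case 2
    define p j where "p = q - 1" and "j = r - (3*k+4)"
    have q: "q = p + 1" and r: "r = 3*k+4 + j" using 2 by (simp_all add: p_def j_def)
    have "q * bb k + r = aa k + aa k + (p * bb k + j)"
      unfolding q r by (simp add: aa_eq bb_eq algebra_simps)
    moreover have "p * bb k + j \<in> gen {aa k, bb k, cc k}"
      using 2 unfolding q r by (intro mult_add_mem_gen_first_run) simp
    ultimately show ?thesis using a by (simp add: add_mem_gen)
  next
    case 3
    define j where "j = r - aa k"
    have r: "r = aa k + j" using 3 by (simp add: j_def aa_eq)
    have "q * bb k + j \<in> gen {aa k, bb k, cc k}"
      using 3 unfolding r by (intro mult_add_mem_gen_first_run) (simp add: aa_eq)
    with a have "aa k + (q * bb k + j) \<in> gen {aa k, bb k, cc k}" by (rule add_mem_gen)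
    then show ?thesis unfolding r by (simp add: algebra_simps)
  qed
qed

lemma H13_subset_gen: "H13 k \<subseteq> gen {aa k, bb k, cc k}"
  using mem_H13_cases mult_add_mem_gen by blast

lemma submonoid_H13: "submonoid (H13 k)"
proof -
  define T where "T = {t. \<forall>h\<in>H13 k. h + t \<in> H13 k}"
  have "submonoid T" unfolding submonoid_def T_def by (auto simp: add.assoc[symmetric])
  moreover have "{aa k, bb k, cc k} \<subseteq> T"
    unfolding T_def using H13_add_aa H13_add_bb H13_add_cc by auto
  ultimately have "gen {aa k, bb k, cc k} \<subseteq> T" by (rule gen_least)
  then have "x + y \<in> H13 k" if "x \<in> H13 k" "y \<in> H13 k" for x y
    using that H13_subset_gen unfolding T_def by blast
  then show ?thesis unfolding submonoid_def H13_def by blast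
qed

lemma H13_eq_gen: "H13 k = gen {aa k, bb k, cc k}"
proof
  have "0 \<in> H13 k" by (simp add: H13_def)
  then have "{aa k, bb k, cc k} \<subseteq> H13 k" using H13_add_aa H13_add_bb H13_add_cc by force
  with submonoid_H13 show "gen {aa k, bb k, cc k} \<subseteq> H13 k" by (rule gen_least)
qed (rule H13_subset_gen)

lemma finite_UNIV_diff_H13: "finite (UNIV - H13 k)"
proof (rule finite_subset)
  show "UNIV - H13 k \<subseteq> {..< 2 * aa k + 2 * k * bb k}" unfolding H13_def by auto
qed simp

section \<open>The enumeration modulo 3\<close>

definition H13_next :: "nat \<Rightarrow> nat \<Rightarrow> nat \<Rightarrow> nat \<times> nat" where
  "H13_next k q r =
     (if r + 1 < bb k \<and> H13_digits k q (r+1) then (q, r+1)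
      else if 1 \<le> q \<and> r < 3*k+4 then (q, 3*k+4)
      else if r < 6*k+5 then (q, 6*k+5)
      else (q+1, 0))"

(* The index of q * bb k + r in the increasing enumeration of H13 k, modulo 3. *)
definition H13_phase :: "nat \<Rightarrow> nat \<Rightarrow> nat \<Rightarrow> nat" where
  "H13_phase k q r =
     (if q = 0 \<and> r = 0 then 0
      else if 2*k+2 \<le> q then r mod 3
      else if even q then (if r < 6*k+5 then (r+1) mod 3 else (r+2) mod 3)
      else (if r < 3*k+4 then (r+2) mod 3 else r mod 3))"

lemma H13_next_digits:
  assumes "H13_digits k q r" "r < bb k" "H13_next k q r = (q', r')"
  shows "H13_digits k q' r' \<and> r' < bb k \<and> (q < q' \<or> (q = q' \<and> r < r'))"
  using assms by (auto simp: H13_next_def H13_digits_def bb_eq split: if_splits)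

lemma H13_next_least:
  assumes "H13_digits k q' r'" "r' < bb k" "q < q' \<or> (q = q' \<and> r < r')"
    and "H13_next k q r = (s, t)"
  shows "s < q' \<or> (s = q' \<and> t \<le> r')"
  using assms by (auto simp: H13_next_def H13_digits_def bb_eq split: if_splits)

lemma H13_phase_Suc:
  assumes "H13_digits k q r" "H13_digits k q (r+1)"
  shows "H13_phase k q (r+1) = Suc (H13_phase k q r) mod 3"
proof (cases "2*k+2 \<le> q")
  case True
  then show ?thesis by (simp add: H13_phase_def mod_Suc_eq)
next
  case False
  have "\<not> (q = 0 \<and> r = 0)" using assms(2) by (auto simp: H13_digits_def)
  have "\<exists>i. q = 2*i \<or> q = 2*i+1" by presburger
  then consider (even) i where "q = 2*i" | (odd) i where "q = 2*i+1" by blast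
  then show ?thesis
  proof cases
    case even
    then have "r \<noteq> 6*k+4" using assms(1) False unfolding H13_digits_def by arith
    then show ?thesis using even False \<open>\<not> (q = 0 \<and> r = 0)\<close>
      by (auto simp: H13_phase_def mod_Suc_eq)
  next
    case odd
    then have "r \<noteq> 3*k+3" using assms(1) False unfolding H13_digits_def by arith
    then show ?thesis using odd False by (auto simp: H13_phase_def mod_Suc_eq)
  qed
qed

lemma H13_phase_jump_second_run:
  assumes "H13_digits k q r" "\<not> H13_digits k q (r+1)" "1 \<le> q" "r < 3*k+4"
  shows "H13_phase k q (3*k+4) = Suc (H13_phase k q r) mod 3
    \<and> (H13_phase k q r = 0 \<or> (3*k+4) mod 3 = Suc r mod 3)"
proof -
  have r: "2*r \<le> 3*q" "3*q < 2*r + 2" "q \<le> 2*k+1"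
    using assms unfolding H13_digits_def by auto
  have "\<exists>i. q = 2*i \<or> q = 2*i+1" by presburger
  then obtain i where "q = 2*i \<or> q = 2*i+1" by blast
  then show ?thesis
  proof (elim disjE)
    assume q: "q = 2*i"
    with r have "r = 3*i" "i \<le> k" by linarith+
    with q assms(3) show ?thesis by (simp add: H13_phase_def; presburger)
  next
    assume q: "q = 2*i+1"
    with r have "r = 3*i+1" "i \<le> k" by linarith+
    with q show ?thesis by (simp add: H13_phase_def; presburger)
  qed
qed

lemma H13_phase_jump_third_run:
  assumes "H13_digits k q r" "\<not> H13_digits k q (r+1)" "q = 0 \<or> 3*k+4 \<le> r" "r < 6*k+5"
  shows "H13_phase k q (6*k+5) = Suc (H13_phase k q r) mod 3
    \<and> (H13_phase k q r = 0 \<or> (6*k+5) mod 3 = Suc r mod 3)"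
proof -
  have r: "(q = 0 \<and> r = 0) \<or> (1 \<le> q \<and> q \<le> 2*k \<and> 2*r \<le> 6*k+5 + 3*q \<and> 6*k+5 + 3*q < 2*r + 2)"
    using assms unfolding H13_digits_def by auto
  have "\<exists>i. q = 2*i \<or> q = 2*i+1" by presburger
  then obtain i where "q = 2*i \<or> q = 2*i+1" by blast
  then show ?thesis
  proof (elim disjE)
    assume q: "q = 2*i"
    with r have "i = 0 \<and> r = 0 \<or> 1 \<le> i \<and> i \<le> k \<and> r = 3*k+2+3*i" by auto
    with q show ?thesis by (auto simp: H13_phase_def; presburger)
  next
    assume q: "q = 2*i+1"
    with r have "r = 3*k+4+3*i" "i < k" by auto
    with q show ?thesis by (simp add: H13_phase_def; presburger)
  qed
qed

lemma H13_phase_jump_next_block: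
  assumes "H13_digits k q r" "r < bb k" "\<not> (r + 1 < bb k \<and> H13_digits k q (r+1))" "6*k+5 \<le> r"
  shows "H13_phase k (q+1) 0 = Suc (H13_phase k q r) mod 3
    \<and> (H13_phase k q r = 0 \<or> 0 = Suc r mod 3)"
proof -
  have r: "(r = 9*k+5 \<and> 2*k+1 \<le> q) \<or> (q \<le> 2*k \<and> 2*r \<le> 12*k+10 + 3*q \<and> 12*k+10 + 3*q < 2*r + 2)"
    using assms unfolding H13_digits_def bb_eq by auto
  show ?thesis
  proof (cases "2*k+1 \<le> q")
    case True
    with r have "r = 9*k+5" by auto
    with True show ?thesis by (auto simp: H13_phase_def; presburger)
  next
    case False
    have "\<exists>i. q = 2*i \<or> q = 2*i+1" by presburger
    then obtain i where "q = 2*i \<or> q = 2*i+1" by blast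
    then show ?thesis
    proof (elim disjE)
      assume q: "q = 2*i"
      with r False have "r = 6*k+5+3*i" "i \<le> k" by auto
      with q show ?thesis by (simp add: H13_phase_def; presburger)
    next
      assume q: "q = 2*i+1"
      with r False have "r = 6*k+6+3*i" "i < k" by auto
      with q show ?thesis by (simp add: H13_phase_def; presburger)
    qed
  qed
qed

lemma H13_phase_next:
  assumes "H13_digits k q r" "r < bb k" "H13_next k q r = (q', r')"
  shows "H13_phase k q' r' = Suc (H13_phase k q r) mod 3
    \<and> (H13_phase k q r = 0 \<or> r' mod 3 = Suc r mod 3)"
proof (cases "r + 1 < bb k \<and> H13_digits k q (r+1)")
  case True
  then have "(q', r') = (q, r+1)" using assms(3) by (simp add: H13_next_def)
  then show ?thesis using H13_phase_Suc[OF assms(1)] True by simp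
next
  case not_cont: False
  show ?thesis
  proof (cases "1 \<le> q \<and> r < 3*k+4")
    case True
    then have no_succ: "\<not> H13_digits k q (r+1)" using not_cont by (simp add: bb_eq)
    then have "(q', r') = (q, 3*k+4)" using assms(3) True by (simp add: H13_next_def)
    with H13_phase_jump_second_run[OF assms(1) no_succ] True show ?thesis by simp
  next
    case not_second: False
    show ?thesis
    proof (cases "r < 6*k+5")
      case True
      then have no_succ: "\<not> H13_digits k q (r+1)" using not_cont by (simp add: bb_eq)
      then have "(q', r') = (q, 6*k+5)"
        using assms(3) not_second True by (auto simp: H13_next_def)
      with H13_phase_jump_third_run[OF assms(1) no_succ] True not_second show ?thesis by auto
    next
      case False
      then have "(q', r') = (q+1, 0)"
        using assms(3) not_cont not_second by (auto simp: H13_next_def)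
      with H13_phase_jump_next_block[OF assms(1,2) not_cont] False show ?thesis by simp
    qed
  qed
qed

lemma infinite_H13: "infinite (H13 k)"
proof -
  have "{2 * aa k + 2 * k * bb k ..} \<subseteq> H13 k" unfolding H13_def by auto
  then show ?thesis using infinite_Ici infinite_super by blast
qed

lemma mult_bb_add_mod_3: "(q * bb k + r) mod 3 = r mod 3"
proof -
  have eq: "q * bb k + r = r + 3 * (q * (3*k+2))" by (simp add: bb_eq algebra_simps)
  show ?thesis unfolding eq by (rule mod_mult_self2)
qed

lemma enumerate_H13_0: "enumerate (H13 k) 0 = 0"
  by (simp add: enumerate_0 H13_def)

lemma enumerate_H13_Suc:
  fixes k p :: nat
  defines "x \<equiv> enumerate (H13 k) p"
  assumes "H13_next k (x div bb k) (x mod bb k) = (q', r')"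
  shows "enumerate (H13 k) (Suc p) = q' * bb k + r'"
proof -
  have x: "x div bb k * bb k + x mod bb k = x" "x mod bb k < bb k"
    by (rule div_mult_mod_eq) (simp add: bb_eq)
  have "H13_digits k (x div bb k) (x mod bb k)"
    using enumerate_in_set[OF infinite_H13] unfolding x_def mem_H13_iff_digits .
  note succ = H13_next_digits[OF this x(2) assms(2)]
  have "q' * bb k + r' \<in> H13 k" using succ by (blast intro: mult_add_mem_H13)
  moreover have "x < q' * bb k + r'"
    using succ x mult_add_le_mult_add_iff[of r' "bb k" "x mod bb k" q' "x div bb k"] by auto
  moreover have "q' * bb k + r' \<le> z" if "z \<in> H13 k" "x < z" for z
  proof -
    obtain q r where z: "z = q * bb k + r" "r < bb k" "H13_digits k q r"
      using \<open>z \<in> H13 k\<close> by (rule mem_H13_cases)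
    have "x div bb k < q \<or> (x div bb k = q \<and> x mod bb k < r)"
      using \<open>x < z\<close> x z mult_add_le_mult_add_iff[of r "bb k" "x mod bb k" q "x div bb k"] by auto
    from H13_next_least[OF z(3,2) this assms(2)] show ?thesis
      using succ z mult_add_le_mult_add_iff[of r' "bb k" r q' q] by auto
  qed
  ultimately show ?thesis
    unfolding enumerate_Suc''[OF infinite_H13] x_def[symmetric] by (intro Least_equality) auto
qed

lemma enumerate_H13_Suc_phase:
  fixes k p :: nat
  defines "x \<equiv> enumerate (H13 k) p" and "y \<equiv> enumerate (H13 k) (Suc p)"
  shows "H13_phase k (y div bb k) (y mod bb k) = Suc (H13_phase k (x div bb k) (x mod bb k)) mod 3
    \<and> (H13_phase k (x div bb k) (x mod bb k) = 0 \<or> y mod 3 = Suc x mod 3)"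
proof -
  obtain q' r' where succ: "H13_next k (x div bb k) (x mod bb k) = (q', r')" by fastforce
  have x: "x mod bb k < bb k" by (simp add: bb_eq)
  have "H13_digits k (x div bb k) (x mod bb k)"
    using enumerate_in_set[OF infinite_H13] unfolding x_def mem_H13_iff_digits .
  note phase = H13_phase_next[OF this x succ] and digits = H13_next_digits[OF this x succ]
  have y: "y = q' * bb k + r'" unfolding y_def using succ by (simp add: enumerate_H13_Suc x_def)
  have "y div bb k = q'" "y mod bb k = r'" using digits unfolding y by simp_all
  moreover have "y mod 3 = r' mod 3" unfolding y by (rule mult_bb_add_mod_3)
  moreover have "Suc x mod 3 = Suc (x mod bb k) mod 3"
    using mult_bb_add_mod_3[of "x div bb k" k "Suc (x mod bb k)"] by simp
  ultimately show ?thesis using phase by simp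
qed

lemma H13_phase_enumerate:
  "H13_phase k (enumerate (H13 k) p div bb k) (enumerate (H13 k) p mod bb k) = p mod 3"
proof (induction p)
  case 0
  then show ?case by (simp add: enumerate_H13_0 H13_phase_def)
next
  case (Suc p)
  then show ?case using enumerate_H13_Suc_phase[of k p] by (simp add: mod_Suc_eq)
qed

lemma enumerate_H13_Suc_mod_3:
  "p mod 3 \<noteq> 0 \<Longrightarrow> enumerate (H13 k) (Suc p) mod 3 = Suc (enumerate (H13 k) p) mod 3"
  using enumerate_H13_Suc_phase[of k p] H13_phase_enumerate[of k p] by simp

lemma enumerate_H13_first_three:
  "{enumerate (H13 k) j | j. 1 \<le> j \<and> j \<le> 3} = {aa k, bb k, cc k}"
proof -
  have "enumerate (H13 k) (Suc 0) = 0 * bb k + (6*k+5)"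
    by (rule enumerate_H13_Suc) (simp add: enumerate_H13_0 H13_next_def H13_digits_def bb_eq)
  then have e1: "enumerate (H13 k) (Suc 0) = aa k" by (simp add: aa_eq)
  have "enumerate (H13 k) (Suc (Suc 0)) = 1 * bb k + 0"
    by (rule enumerate_H13_Suc) (simp add: e1 H13_next_def H13_digits_def aa_eq bb_eq)
  then have e2: "enumerate (H13 k) (Suc (Suc 0)) = bb k" by simp
  have "enumerate (H13 k) (Suc (Suc (Suc 0))) = 1 * bb k + 1"
    by (rule enumerate_H13_Suc) (simp add: e2 H13_next_def H13_digits_def bb_eq)
  then have e3: "enumerate (H13 k) (Suc (Suc (Suc 0))) = cc k" by (simp add: cc_def)
  have "{j::nat. 1 \<le> j \<and> j \<le> 3} = {Suc 0, Suc (Suc 0), Suc (Suc (Suc 0))}" by auto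
  then have "{enumerate (H13 k) j | j. 1 \<le> j \<and> j \<le> 3}
      = enumerate (H13 k) ` {Suc 0, Suc (Suc 0), Suc (Suc (Suc 0))}" by blast
  then show ?thesis by (simp only: image_insert image_empty e1 e2 e3)
qed

lemma bij_betw_enumerate_H13_mod_3:
  "bij_betw (\<lambda>j. enumerate (H13 k) (m * 3 + j) mod 3) {1..3} {0..<3}"
proof (rule bij_betw_consecutive_mod_3)
  have "(m * 3 + 1) mod 3 \<noteq> 0" "(m * 3 + 2) mod 3 \<noteq> 0" by presburger+
  moreover have "Suc (m * 3 + 1) = m * 3 + 2" "Suc (m * 3 + 2) = m * 3 + 3" by simp_all
  ultimately show "enumerate (H13 k) (m * 3 + 2) mod 3 = Suc (enumerate (H13 k) (m * 3 + 1)) mod 3"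
    and "enumerate (H13 k) (m * 3 + 3) mod 3 = Suc (enumerate (H13 k) (m * 3 + 2)) mod 3"
    using enumerate_H13_Suc_mod_3 by metis+
qed

theorem lemma4p13:
  fixes k :: nat
  assumes "k \<ge> 1"
  defines "S \<equiv> {aa k, bb k, cc k}"
  defines "G \<equiv> gen S"
  shows "(submonoid (H13 k) \<and> H13 k \<subseteq> G \<and> finite (UNIV - H13 k) \<and> S \<subseteq> H13 k)
         \<and> perm_num_semigroup 3 (H13 k)"
proof -
  have H: "H13 k = G" unfolding G_def S_def by (rule H13_eq_gen)
  then have "S \<subseteq> H13 k" unfolding G_def by (simp add: subset_gen)
  moreover have "numerical_semigroup (H13 k)"
    unfolding numerical_semigroup_def using submonoid_H13 finite_UNIV_diff_H13 ..
  moreover have "H13 k = gen {enumerate (H13 k) j | j. 1 \<le> j \<and> j \<le> 3}"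
    unfolding enumerate_H13_first_three by (rule H13_eq_gen)
  ultimately show ?thesis
    using submonoid_H13 finite_UNIV_diff_H13 bij_betw_enumerate_H13_mod_3 H
    unfolding perm_num_semigroup_def S_def by blast
qed

end
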